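(* Let $Q$ be a positive definite $d\times d$ matrix partitioned into blocks $(Q_{ij})_{i,j=1}^s$. The function $$f(w)=\lambda_{\min}\big(\sqrt{Q^{\rm ext}}\,D^{\rm ext}_w\sqrt{Q^{\rm ext}}\big),\quad Q^{\rm ext}=\mathrm{diag}(Q,1),\quad D^{\rm ext}_w=\mathrm{diag}\Big(w_1(Q_{11})^{-1},\dots,w_s(Q_{ss})^{-1},\ 1-\sum_{i=1}^sw_i\Big),$$ is concave on $\Delta_s=\{w\in\mathbb{R}^s: w_i>0,\ 1-w_1-\dots-w_s>0\}$.
   Context: $\sqrt{\cdot}$ denotes the symmetric positive definite square root and $\lambda_{\min}$ the smallest eigenvalue. *)

theory Defs
  imports "HOL-Analysis.Analysis"
begin

definition pos_def_mat :: "real^'n^'n \<Rightarrow> bool" where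
  "pos_def_mat A \<longleftrightarrow> transpose A = A \<and> (\<forall>x. x \<noteq> 0 \<longrightarrow> x \<bullet> (A *v x) > 0)"

definition pd_sqrt :: "real^'n^'n \<Rightarrow> real^'n^'n" where
  "pd_sqrt A = (THE B. pos_def_mat B \<and> B ** B = A)"

definition eigenvalues :: "real^'n^'n \<Rightarrow> real set" where
  "eigenvalues A = {l. \<exists>v. v \<noteq> 0 \<and> A *v v = l *\<^sub>R v}"

definition lambda_min :: "real^'n^'n \<Rightarrow> real" where
  "lambda_min A = Min (eigenvalues A)"

text \<open>Block structure: blk j is the block containing index j. The block-diagonal
  part diag(Q_11,...,Q_ss) of Q; its inverse is diag(Q_11^{-1},...,Q_ss^{-1}).\<close>
definition block_diag_part :: "('n \<Rightarrow> 's) \<Rightarrow> real^'n^'n \<Rightarrow> real^'n^'n" where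
  "block_diag_part blk Q = (\<chi> i j. if blk i = blk j then Q $ i $ j else 0)"

text \<open>Q^ext = diag(Q,1) indexed by 'n option, None being the extra coordinate.\<close>
definition Qext :: "real^'n^'n \<Rightarrow> real^('n option)^('n option)" where
  "Qext Q = (\<chi> i j. case (i, j) of
       (Some a, Some b) \<Rightarrow> Q $ a $ b
     | (None, None) \<Rightarrow> 1
     | _ \<Rightarrow> 0)"

definition Dext :: "('n \<Rightarrow> 's::finite) \<Rightarrow> real^'n^'n \<Rightarrow> real^'s \<Rightarrow> real^('n option)^('n option)" where
  "Dext blk Q w = (\<chi> i j. case (i, j) of
       (Some a, Some b) \<Rightarrow> (if blk a = blk b
                             then w $ (blk a) * matrix_inv (block_diag_part blk Q) $ a $ b
                             else 0)
     | (None, None) \<Rightarrow> 1 - sum (\<lambda>k. w $ k) UNIV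
     | _ \<Rightarrow> 0)"

end

theory Submission
  imports Defs
begin

text \<open>For a symmetric matrix M the smallest eigenvalue is the minimum of the Rayleigh quotient
  x \<bullet> (M *v x) over unit vectors x. The matrix pd_sqrt(Q^ext) ** D^ext_w ** pd_sqrt(Q^ext) is
  symmetric and affine in w, so for each fixed x the Rayleigh quotient is an affine function of w,
  and lambda_min, being their pointwise minimum, is concave. Most of the work is the spectral
  theorem for real symmetric matrices, which identifies lambda_min with the Rayleigh minimum and
  makes the positive definite square root exist and unique, hence symmetric.\<close>

section \<open>Symmetric matrices and their quadratic forms\<close>

lemma symmetric_inner_mult_vec:
  fixes A :: "real^'n^'n"
  assumes "transpose A = A"
  shows "x \<bullet> (A *v y) = (A *v x) \<bullet> y"
  by (metis assms dot_lmul_matrix transpose_matrix_vector)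

lemma inner_mult_vec_expand:
  "x \<bullet> ((A::real^'n^'n) *v y) = (\<Sum>i\<in>UNIV. \<Sum>j\<in>UNIV. x$i * A$i$j * y$j)"
  by (simp add: inner_vec_def matrix_vector_mult_def sum_distrib_left mult_ac)

lemma pos_def_mat_entry_sym:
  "pos_def_mat A \<Longrightarrow> A $ i $ j = A $ j $ i"
  unfolding pos_def_mat_def by (metis transpose_def vec_lambda_beta)

lemma pos_def_mat_quadratic_nonneg:
  "pos_def_mat A \<Longrightarrow> 0 \<le> x \<bullet> (A *v x)"
  by (cases "x = 0") (auto simp: pos_def_mat_def intro: less_imp_le)

text \<open>If the quadratic form of u vanished without A *v u = 0, moving from u in the direction
  of a vector y with y \<bullet> (A *v u) \<noteq> 0 would make the form negative.\<close>
lemma psd_quadratic_form_zero_imp_kernel: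
  fixes A :: "real^'n^'n"
  assumes sym: "transpose A = A" and V: "subspace V" and inv: "\<forall>x\<in>V. A *v x \<in> V"
    and psd: "\<forall>x\<in>V. x \<bullet> (A *v x) \<ge> 0" and u: "u \<in> V" and u0: "u \<bullet> (A *v u) = 0"
  shows "A *v u = 0"
proof -
  have orth: "y \<bullet> (A *v u) = 0" if y: "y \<in> V" for y
  proof (rule ccontr)
    define c where "c = y \<bullet> (A *v u)"
    define a where "a = y \<bullet> (A *v y)"
    define t where "t = - c / (a + 1)"
    assume "y \<bullet> (A *v u) \<noteq> 0"
    hence c0: "c \<noteq> 0" by (simp add: c_def)
    have a1: "a + 1 > 0" using psd y by (simp add: a_def add_nonneg_pos)
    have "u + t *\<^sub>R y \<in> V" using V u y by (simp add: subspace_add subspace_scale)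
    hence "0 \<le> (u + t *\<^sub>R y) \<bullet> (A *v (u + t *\<^sub>R y))" using psd by blast
    also have "\<dots> = 2 * t * c + t^2 * a"
    proof -
      have "u \<bullet> (A *v y) = c"
        using symmetric_inner_mult_vec[OF sym, of u y] by (simp add: c_def inner_commute)
      thus ?thesis using u0
        by (simp add: matrix_vector_right_distrib matrix_vector_mult_scaleR inner_add_left
            inner_add_right c_def a_def power2_eq_square algebra_simps)
    qed
    also have "\<dots> \<le> 2 * t * c + t^2 * (a + 1)" by (simp add: distrib_left)
    also have "\<dots> = t * c"
      using a1 by (simp add: power2_eq_square mult.assoc t_def)
    also have "\<dots> < 0" using a1 c0 by (auto simp: t_def zero_less_divide_iff zero_less_mult_iff)
    finally show False by simp
  qed
  show ?thesis using orth[OF inv[rule_format, OF u]] by simp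
qed

text \<open>A minimiser of the Rayleigh quotient on an invariant subspace is an eigenvector: its
  Rayleigh value m makes A - m I positive semidefinite on V with u in the kernel of its form.\<close>
lemma rayleigh_minimizer_eigenvector:
  fixes A :: "real^'n^'n"
  assumes sym: "transpose A = A" and V: "subspace V" and inv: "\<forall>x\<in>V. A *v x \<in> V"
    and ne: "V \<noteq> {0}"
  obtains u m where "u \<in> V" "norm u = 1" "A *v u = m *\<^sub>R u"
    "\<And>x. x \<in> V \<Longrightarrow> norm x = 1 \<Longrightarrow> m \<le> x \<bullet> (A *v x)"
proof -
  define K where "K = V \<inter> sphere 0 1"
  have "compact K" unfolding K_def
    by (metis Int_commute compact_Int_closed compact_sphere closed_subspace V)
  moreover have "K \<noteq> {}"
  proof -
    obtain x where "x \<in> V" "x \<noteq> 0" using ne V subspace_0 by blast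
    hence "x /\<^sub>R norm x \<in> K" using V by (simp add: K_def subspace_scale)
    thus ?thesis by blast
  qed
  moreover have "continuous_on K (\<lambda>x. x \<bullet> (A *v x))"
    by (intro continuous_intros)
  ultimately obtain u where uK: "u \<in> K" and umin: "\<forall>y\<in>K. u \<bullet> (A *v u) \<le> y \<bullet> (A *v y)"
    using continuous_attains_inf by blast
  define m where "m = u \<bullet> (A *v u)"
  define B where "B = A - m *\<^sub>R mat 1"
  have Bv: "B *v x = A *v x - m *\<^sub>R x" for x
    by (simp add: B_def matrix_vector_mult_diff_rdistrib flip: scaleR_matrix_vector_assoc)
  have u: "u \<in> V" "norm u = 1" using uK by (auto simp: K_def)
  have m_le: "m \<le> x \<bullet> (A *v x)" if "x \<in> V" "norm x = 1" for x
    using umin that by (auto simp: K_def m_def)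
  have "transpose B = B" using sym
    by (simp add: B_def transpose_def vec_eq_iff mat_def)
  moreover have "\<forall>x\<in>V. B *v x \<in> V" using inv V by (simp add: Bv subspace_diff subspace_scale)
  moreover have "\<forall>x\<in>V. x \<bullet> (B *v x) \<ge> 0"
  proof
    fix x assume x: "x \<in> V"
    show "x \<bullet> (B *v x) \<ge> 0"
    proof (cases "x = 0")
      case False
      define y where "y = x /\<^sub>R norm x"
      have y: "y \<in> V" "norm y = 1" using x False V by (auto simp: y_def subspace_scale)
      hence "0 \<le> y \<bullet> (B *v y)"
        using m_le[OF y] by (simp add: Bv inner_diff_right dot_square_norm)
      hence "0 \<le> (norm x)^2 * (y \<bullet> (B *v y))" by simp
      also have "\<dots> = x \<bullet> (B *v x)"
        using False by (simp add: y_def matrix_vector_mult_scaleR power2_eq_square field_simps)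
      finally show ?thesis .
    qed simp
  qed
  moreover have "u \<bullet> (B *v u) = 0" using u
    by (simp add: Bv inner_diff_right m_def dot_square_norm)
  ultimately have "B *v u = 0" using psd_quadratic_form_zero_imp_kernel[OF _ V] u by blast
  hence "A *v u = m *\<^sub>R u" by (simp add: Bv)
  with u m_le show ?thesis using that by blast
qed

definition orthonormal_basis :: "(real^'n) set \<Rightarrow> bool" where
  "orthonormal_basis E \<longleftrightarrow>
     finite E \<and> pairwise orthogonal E \<and> (\<forall>e\<in>E. norm e = 1) \<and> span E = UNIV"

lemma orthonormal_basis_inner:
  "orthonormal_basis E \<Longrightarrow> e \<in> E \<Longrightarrow> e' \<in> E \<Longrightarrow> e \<bullet> e' = (if e = e' then 1 else 0)"
  unfolding orthonormal_basis_def pairwise_def orthogonal_def by (auto simp: norm_eq_1)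

lemma orthonormal_basis_sum_expand:
  "orthonormal_basis E \<Longrightarrow> (\<Sum>e\<in>E. (x \<bullet> e) *\<^sub>R e) = x"
  unfolding orthonormal_basis_def by (intro orthonormal_basis_expand) auto

lemma orthonormal_basis_eq_0:
  "orthonormal_basis E \<Longrightarrow> (\<And>e. e \<in> E \<Longrightarrow> x \<bullet> e = 0) \<Longrightarrow> x = 0"
  using orthonormal_basis_sum_expand[of E x] by simp

lemma symmetric_orthonormal_eigenbasis_subspace:
  fixes A :: "real^'n^'n"
  assumes sym: "transpose A = A"
  shows "subspace V \<Longrightarrow> (\<forall>x\<in>V. A *v x \<in> V) \<Longrightarrow>
     \<exists>E. E \<subseteq> V \<and> finite E \<and> pairwise orthogonal E \<and>
        (\<forall>e\<in>E. norm e = 1 \<and> (\<exists>l. A *v e = l *\<^sub>R e)) \<and> span E = V"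
proof (induction "dim V" arbitrary: V rule: less_induct)
  case less
  show ?case
  proof (cases "V = {0}")
    case True
    thus ?thesis by (intro exI[of _ "{}"]) auto
  next
    case False
    obtain u m where u: "u \<in> V" "norm u = 1" "A *v u = m *\<^sub>R u"
      using rayleigh_minimizer_eigenvector[OF sym less.prems False] by blast
    have uu: "u \<bullet> u = 1" using u(2) by (simp add: norm_eq_1)
    define W where "W = {x\<in>V. u \<bullet> x = 0}"
    have sW: "subspace W" using less.prems(1)
      by (auto simp: W_def subspace_def inner_add_right)
    have iW: "\<forall>x\<in>W. A *v x \<in> W"
      using less.prems(2) u(3) by (auto simp: W_def symmetric_inner_mult_vec[OF sym, of u])
    have "u \<notin> W" using uu by (simp add: W_def)
    moreover have "W \<subseteq> V" by (auto simp: W_def)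
    ultimately have "W \<subset> V" using u(1) by blast
    hence "dim W < dim V" using sW less.prems(1) by (metis dim_psubset span_eq_iff)
    from less.hyps[OF this sW iW] obtain F where F: "F \<subseteq> W" "finite F" "pairwise orthogonal F"
      "\<forall>e\<in>F. norm e = 1 \<and> (\<exists>l. A *v e = l *\<^sub>R e)" "span F = W" by blast
    have "pairwise orthogonal (insert u F)" using F(1,3)
      by (auto simp: pairwise_insert W_def orthogonal_def inner_commute)
    moreover have "span (insert u F) = V"
    proof
      show "span (insert u F) \<subseteq> V" using F(1) u(1) less.prems(1)
        by (intro span_minimal) (auto simp: W_def)
      show "V \<subseteq> span (insert u F)"
      proof
        fix x assume x: "x \<in> V"
        have "x - (u \<bullet> x) *\<^sub>R u \<in> W" using x u(1) uu less.prems(1)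
          by (auto simp: W_def inner_diff_right subspace_diff subspace_scale)
        hence "x - (u \<bullet> x) *\<^sub>R u \<in> span (insert u F)" using F(5) span_mono[of F "insert u F"]
          by auto
        moreover have "(u \<bullet> x) *\<^sub>R u \<in> span (insert u F)" by (simp add: span_base span_scale)
        ultimately show "x \<in> span (insert u F)" by (metis diff_add_cancel span_add)
      qed
    qed
    ultimately show ?thesis using F u by (intro exI[of _ "insert u F"]) (auto simp: W_def)
  qed
qed

lemma symmetric_orthonormal_eigenbasis:
  fixes A :: "real^'n^'n"
  assumes "transpose A = A"
  obtains E ev where "orthonormal_basis E" "\<And>e. e \<in> E \<Longrightarrow> A *v e = ev e *\<^sub>R e"
proof -
  obtain E where E: "finite E" "pairwise orthogonal E"
        "\<forall>e\<in>E. norm e = 1 \<and> (\<exists>l. A *v e = l *\<^sub>R e)" "span E = UNIV"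
    using symmetric_orthonormal_eigenbasis_subspace[OF assms, of UNIV] by auto
  then obtain ev where "\<forall>e\<in>E. A *v e = ev e *\<^sub>R e" by metis
  with E show ?thesis by (intro that[of E ev]) (auto simp: orthonormal_basis_def)
qed

section \<open>Matrices with a prescribed orthonormal eigenbasis\<close>

definition spectral_matrix :: "(real^'n) set \<Rightarrow> (real^'n \<Rightarrow> real) \<Rightarrow> real^'n^'n" where
  "spectral_matrix E f = (\<chi> i j. \<Sum>e\<in>E. f e * e$i * e$j)"

lemma spectral_matrix_mult_vec:
  "spectral_matrix E f *v x = (\<Sum>e\<in>E. (f e * (e \<bullet> x)) *\<^sub>R e)"
proof -
  have "(spectral_matrix E f *v x) $ i = (\<Sum>e\<in>E. (f e * (e \<bullet> x)) *\<^sub>R e) $ i" for i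
  proof -
    have "(spectral_matrix E f *v x) $ i = (\<Sum>j\<in>UNIV. \<Sum>e\<in>E. f e * e$i * e$j * x$j)"
      by (simp add: spectral_matrix_def matrix_vector_mult_def sum_distrib_right)
    also have "\<dots> = (\<Sum>e\<in>E. \<Sum>j\<in>UNIV. f e * e$i * (e$j * x$j))"
      by (subst sum.swap) (simp add: mult.assoc)
    also have "\<dots> = (\<Sum>e\<in>E. (f e * (e \<bullet> x)) * e$i)"
      by (simp add: inner_vec_def sum_distrib_left mult_ac)
    finally show ?thesis by (simp add: sum_component)
  qed
  thus ?thesis by (simp add: vec_eq_iff)
qed

lemma transpose_spectral_matrix: "transpose (spectral_matrix E f) = spectral_matrix E f"
  by (simp add: spectral_matrix_def transpose_def vec_eq_iff mult_ac)

lemma spectral_matrix_eigenvector: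
  assumes "orthonormal_basis E" "e' \<in> E"
  shows "spectral_matrix E f *v e' = f e' *\<^sub>R e'"
proof -
  have "spectral_matrix E f *v e' = (\<Sum>e\<in>E. (if e = e' then f e' *\<^sub>R e' else 0))"
    unfolding spectral_matrix_mult_vec using assms
    by (intro sum.cong) (auto simp: orthonormal_basis_inner)
  also have "\<dots> = f e' *\<^sub>R e'" using assms by (simp add: orthonormal_basis_def)
  finally show ?thesis .
qed

lemma matrix_vector_mult_sum: "(A::real^'n^'m) *v (\<Sum>e\<in>E. g e) = (\<Sum>e\<in>E. A *v g e)"
  by (induction E rule: infinite_finite_induct) (auto simp: matrix_vector_right_distrib)

lemma eq_spectral_matrixI:
  fixes A :: "real^'n^'n"
  assumes "orthonormal_basis E" "\<And>e. e \<in> E \<Longrightarrow> A *v e = f e *\<^sub>R e"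
  shows "A = spectral_matrix E f"
proof -
  have "A *v x = spectral_matrix E f *v x" for x
  proof -
    have "A *v x = A *v (\<Sum>e\<in>E. (x \<bullet> e) *\<^sub>R e)" using orthonormal_basis_sum_expand[OF assms(1)] by simp
    also have "\<dots> = (\<Sum>e\<in>E. (f e * (e \<bullet> x)) *\<^sub>R e)"
      using assms(2) by (simp add: matrix_vector_mult_sum matrix_vector_mult_scaleR inner_commute mult_ac)
    finally show ?thesis by (simp add: spectral_matrix_mult_vec)
  qed
  thus ?thesis by (simp add: matrix_eq)
qed

lemma spectral_matrix_quadratic_form:
  "x \<bullet> (spectral_matrix E f *v x) = (\<Sum>e\<in>E. f e * (e \<bullet> x)^2)"
  by (simp add: spectral_matrix_mult_vec inner_sum_right power2_eq_square inner_commute mult_ac)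

lemma spectral_matrix_mult:
  "orthonormal_basis E \<Longrightarrow> spectral_matrix E f ** spectral_matrix E g = spectral_matrix E (\<lambda>e. f e * g e)"
  by (rule eq_spectral_matrixI, assumption)
     (simp add: spectral_matrix_eigenvector matrix_vector_mult_scaleR flip: matrix_vector_mul_assoc)

lemma pos_def_spectral_matrix:
  fixes E :: "(real^'n) set"
  assumes "orthonormal_basis E" "\<And>e. e \<in> E \<Longrightarrow> f e > 0"
  shows "pos_def_mat (spectral_matrix E f)"
  unfolding pos_def_mat_def
proof (intro conjI allI impI transpose_spectral_matrix)
  fix x :: "real^'n" assume "x \<noteq> 0"
  then obtain e where e: "e \<in> E" "x \<bullet> e \<noteq> 0" using orthonormal_basis_eq_0[OF assms(1)] by blast
  have "0 < f e * (e \<bullet> x)^2" using e assms(2) by (simp add: inner_commute)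
  also have "\<dots> \<le> (\<Sum>e\<in>E. f e * (e \<bullet> x)^2)"
    using e assms by (intro member_le_sum) (auto simp: orthonormal_basis_def less_imp_le)
  finally show "0 < x \<bullet> (spectral_matrix E f *v x)" by (simp add: spectral_matrix_quadratic_form)
qed

section \<open>The positive definite square root\<close>

text \<open>If C is positive definite, then C + s I is injective for s \<ge> 0, so from
  (C + s I)(C - s I) e = (C^2 - s^2) e = 0 we get C e = s e.\<close>
lemma pos_def_sqrt_eigenvector:
  fixes C :: "real^'n^'n"
  assumes C: "pos_def_mat C" and e: "(C ** C) *v e = l *\<^sub>R e" and l: "l \<ge> 0"
  shows "C *v e = sqrt l *\<^sub>R e"
proof (rule ccontr)
  define s where "s = sqrt l"
  define v where "v = C *v e - s *\<^sub>R e"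
  assume "C *v e \<noteq> sqrt l *\<^sub>R e"
  hence "v \<noteq> 0" by (simp add: v_def s_def)
  hence pos: "v \<bullet> (C *v v) > 0" using C by (simp add: pos_def_mat_def)
  have "C *v v + s *\<^sub>R v = (C ** C) *v e - (s * s) *\<^sub>R e"
    by (simp add: v_def matrix_vector_mult_diff_distrib matrix_vector_mult_scaleR
        matrix_vector_mul_assoc algebra_simps)
  also have "\<dots> = 0" using e l by (simp add: s_def)
  finally have "v \<bullet> (C *v v) + s * (v \<bullet> v) = 0"
    by (metis inner_add_right inner_scaleR_right inner_zero_right)
  moreover have "s * (v \<bullet> v) \<ge> 0" using l by (simp add: s_def)
  ultimately show False using pos by linarith
qed

lemma pd_sqrt:
  fixes A :: "real^'n^'n"
  assumes pd: "pos_def_mat A"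
  shows pos_def_mat_pd_sqrt: "pos_def_mat (pd_sqrt A)"
    and pd_sqrt_mult_self: "pd_sqrt A ** pd_sqrt A = A"
proof -
  obtain E ev where E: "orthonormal_basis E" and ev: "\<And>e. e \<in> E \<Longrightarrow> A *v e = ev e *\<^sub>R e"
    using symmetric_orthonormal_eigenbasis pd unfolding pos_def_mat_def by metis
  have ev_pos: "ev e > 0" if e: "e \<in> E" for e
  proof -
    have "norm e = 1" using E e by (simp add: orthonormal_basis_def)
    hence "e \<noteq> 0" by auto
    hence "0 < e \<bullet> (A *v e)" using pd by (simp add: pos_def_mat_def)
    also have "\<dots> = ev e" using ev[OF e] \<open>norm e = 1\<close> by (simp add: norm_eq_1)
    finally show ?thesis .
  qed
  define B where "B = spectral_matrix E (\<lambda>e. sqrt (ev e))"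
  have B_pd: "pos_def_mat B" unfolding B_def using ev_pos by (intro pos_def_spectral_matrix[OF E]) auto
  have "B ** B = spectral_matrix E (\<lambda>e. sqrt (ev e) * sqrt (ev e))"
    unfolding B_def by (rule spectral_matrix_mult[OF E])
  also have "\<dots> = A" using ev ev_pos
    by (intro eq_spectral_matrixI[OF E, symmetric]) (simp add: less_imp_le)
  finally have BB: "B ** B = A" .
  have unique: "C = B" if C: "pos_def_mat C" "C ** C = A" for C
    unfolding B_def using C ev ev_pos
    by (intro eq_spectral_matrixI[OF E] pos_def_sqrt_eigenvector) (auto intro: less_imp_le)
  have "pd_sqrt A = B" unfolding pd_sqrt_def
    by (rule the1_equality) (use B_pd BB unique in blast)+
  with B_pd BB show "pos_def_mat (pd_sqrt A)" "pd_sqrt A ** pd_sqrt A = A" by simp_all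
qed

section \<open>The smallest eigenvalue as a Rayleigh minimum\<close>

lemma finite_eigenvalues_symmetric:
  fixes M :: "real^'n^'n"
  assumes sym: "transpose M = M"
  shows "finite (eigenvalues M)"
proof -
  obtain E ev where E: "orthonormal_basis E" and ev: "\<And>e. e \<in> E \<Longrightarrow> M *v e = ev e *\<^sub>R e"
    using symmetric_orthonormal_eigenbasis[OF sym] by metis
  have "eigenvalues M \<subseteq> ev ` E"
  proof
    fix l assume "l \<in> eigenvalues M"
    then obtain v where v: "v \<noteq> 0" "M *v v = l *\<^sub>R v" by (auto simp: eigenvalues_def)
    then obtain e where e: "e \<in> E" "v \<bullet> e \<noteq> 0" using orthonormal_basis_eq_0[OF E] by blast
    have "l * (e \<bullet> v) = e \<bullet> (M *v v)" using v by simp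
    also have "\<dots> = (M *v e) \<bullet> v" by (rule symmetric_inner_mult_vec[OF sym])
    also have "\<dots> = ev e * (e \<bullet> v)" using ev[OF e(1)] by simp
    finally have "l = ev e" using e by (simp add: inner_commute)
    thus "l \<in> ev ` E" using e by blast
  qed
  moreover have "finite E" using E by (simp add: orthonormal_basis_def)
  ultimately show ?thesis using finite_surj by blast
qed

lemma lambda_min_rayleigh:
  fixes M :: "real^'n^'n"
  assumes sym: "transpose M = M"
  shows lambda_min_le_rayleigh: "norm x = 1 \<Longrightarrow> lambda_min M \<le> x \<bullet> (M *v x)"
    and lambda_min_attained: "\<exists>u. norm u = 1 \<and> u \<bullet> (M *v u) = lambda_min M"
proof -
  have nontrivial: "(UNIV :: (real^'n) set) \<noteq> {0}"
    by (metis axis_eq_0_iff singletonD UNIV_I zero_neq_one)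
  obtain u m where u: "norm u = 1" "M *v u = m *\<^sub>R u"
    and m_le: "\<And>x. norm x = 1 \<Longrightarrow> m \<le> x \<bullet> (M *v x)"
    by (rule rayleigh_minimizer_eigenvector[OF sym subspace_UNIV _ nontrivial]) auto
  have "u \<noteq> 0" using u(1) by auto
  hence "m \<in> eigenvalues M" using u(2) by (auto simp: eigenvalues_def)
  moreover have "m \<le> l" if l: "l \<in> eigenvalues M" for l
  proof -
    obtain v where v: "v \<noteq> 0" "M *v v = l *\<^sub>R v" using l by (auto simp: eigenvalues_def)
    define y where "y = v /\<^sub>R norm v"
    have y: "norm y = 1" "M *v y = l *\<^sub>R y"
      using v by (simp_all add: y_def matrix_vector_mult_scaleR)
    hence "y \<bullet> (M *v y) = l" by (simp add: norm_eq_1)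
    thus "m \<le> l" using m_le[OF y(1)] by simp
  qed
  ultimately have m: "lambda_min M = m" unfolding lambda_min_def
    by (intro Min_eqI finite_eigenvalues_symmetric[OF sym]) auto
  show "norm x = 1 \<Longrightarrow> lambda_min M \<le> x \<bullet> (M *v x)" using m m_le by simp
  show "\<exists>u. norm u = 1 \<and> u \<bullet> (M *v u) = lambda_min M"
    using u m by (intro exI[of _ u]) (simp add: norm_eq_1)
qed

lemma concave_on_lambda_min_affine:
  fixes M :: "'a::real_vector \<Rightarrow> real^'n^'n"
  assumes "convex C" and sym: "\<And>w. w \<in> C \<Longrightarrow> transpose (M w) = M w"
    and affine: "\<And>w z u v. w \<in> C \<Longrightarrow> z \<in> C \<Longrightarrow> u + v = 1 \<Longrightarrow>
                   M (u *\<^sub>R w + v *\<^sub>R z) = u *\<^sub>R M w + v *\<^sub>R M z"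
  shows "concave_on C (\<lambda>w. lambda_min (M w))"
  unfolding concave_on_iff
proof (intro conjI assms ballI allI impI)
  fix w z and u v :: real
  assume wz: "w \<in> C" "z \<in> C" and uv: "0 \<le> u" "0 \<le> v" "u + v = 1"
  have "u *\<^sub>R w + v *\<^sub>R z \<in> C" using \<open>convex C\<close> wz uv by (simp add: convexD)
  then obtain x where x: "norm x = 1"
    "x \<bullet> (M (u *\<^sub>R w + v *\<^sub>R z) *v x) = lambda_min (M (u *\<^sub>R w + v *\<^sub>R z))"
    using lambda_min_attained sym by blast
  have "u * lambda_min (M w) + v * lambda_min (M z) \<le> u * (x \<bullet> (M w *v x)) + v * (x \<bullet> (M z *v x))"
    using lambda_min_le_rayleigh[OF sym x(1)] wz uv by (intro add_mono mult_left_mono) auto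
  also have "\<dots> = x \<bullet> (M (u *\<^sub>R w + v *\<^sub>R z) *v x)"
    unfolding affine[OF wz uv(3)]
    by (simp add: matrix_vector_mult_add_rdistrib inner_add_right flip: scaleR_matrix_vector_assoc)
  finally show "u * lambda_min (M w) + v * lambda_min (M z) \<le> lambda_min (M (u *\<^sub>R w + v *\<^sub>R z))"
    using x(2) by simp
qed

section \<open>The matrices Q^ext and D^ext_w\<close>

lemma sum_UNIV_option:
  "(\<Sum>i\<in>(UNIV::'a::finite option set). f i) = f None + (\<Sum>a\<in>UNIV. f (Some a))"
  by (simp add: UNIV_option_conv sum.reindex)

lemma pos_def_mat_Qext:
  fixes Q :: "real^'n^'n"
  assumes pd: "pos_def_mat Q"
  shows "pos_def_mat (Qext Q)"
proof -
  have sym: "transpose (Qext Q) = Qext Q"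
    by (simp add: Qext_def transpose_def vec_eq_iff pos_def_mat_entry_sym[OF pd]
        split: option.splits)
  have quadratic: "x \<bullet> (Qext Q *v x) = (\<chi> a. x $ Some a) \<bullet> (Q *v (\<chi> a. x $ Some a)) + (x $ None)^2"
    for x
    by (simp add: inner_mult_vec_expand sum_UNIV_option Qext_def power2_eq_square)
  have "0 < x \<bullet> (Qext Q *v x)" if x: "x \<noteq> 0" for x
  proof (cases "(\<chi> a. x $ Some a) = 0")
    case True
    have "x $ None \<noteq> 0"
    proof
      assume "x $ None = 0"
      hence "x $ i = 0" for i using True by (cases i) (auto simp: vec_eq_iff)
      thus False using x by (simp add: vec_eq_iff)
    qed
    thus ?thesis using True by (simp add: quadratic)
  next
    case False
    hence "0 < (\<chi> a. x $ Some a) \<bullet> (Q *v (\<chi> a. x $ Some a))" using pd by (simp add: pos_def_mat_def)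
    thus ?thesis by (simp add: quadratic add_pos_nonneg)
  qed
  with sym show ?thesis by (simp add: pos_def_mat_def)
qed

definition block_proj :: "('n \<Rightarrow> 's) \<Rightarrow> 's \<Rightarrow> real^'n \<Rightarrow> real^'n" where
  "block_proj blk b x = (\<chi> i. if blk i = b then x $ i else 0)"

lemma block_diag_part_quadratic_form:
  fixes Q :: "real^'n^'n" and blk :: "'n \<Rightarrow> 's::finite"
  shows "x \<bullet> (block_diag_part blk Q *v x) =
           (\<Sum>b\<in>UNIV. block_proj blk b x \<bullet> (Q *v block_proj blk b x))"
proof -
  have "(\<Sum>b\<in>UNIV. block_proj blk b x \<bullet> (Q *v block_proj blk b x)) =
        (\<Sum>b\<in>UNIV. \<Sum>i\<in>UNIV. \<Sum>j\<in>UNIV. (if blk i = b \<and> blk j = b then x$i * Q$i$j * x$j else 0))"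
    unfolding inner_mult_vec_expand block_proj_def by (intro sum.cong refl) simp
  also have "\<dots> = (\<Sum>i\<in>UNIV. \<Sum>j\<in>UNIV. \<Sum>b\<in>UNIV. (if blk i = b \<and> blk j = b then x$i * Q$i$j * x$j else 0))"
    by (subst sum.swap) (rule sum.cong[OF refl], rule sum.swap)
  also have "\<dots> = (\<Sum>i\<in>UNIV. \<Sum>j\<in>UNIV. (if blk i = blk j then x$i * Q$i$j * x$j else 0))"
  proof (intro sum.cong refl)
    fix i j
    have "(\<Sum>b\<in>UNIV. (if blk i = b \<and> blk j = b then x$i * Q$i$j * x$j else 0)) =
          (\<Sum>b\<in>UNIV. (if b = blk i then (if blk i = blk j then x$i * Q$i$j * x$j else 0) else 0))"
      by (intro sum.cong) auto
    thus "(\<Sum>b\<in>UNIV. (if blk i = b \<and> blk j = b then x$i * Q$i$j * x$j else 0)) =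
          (if blk i = blk j then x$i * Q$i$j * x$j else 0)" by simp
  qed
  also have "\<dots> = x \<bullet> (block_diag_part blk Q *v x)"
    by (simp add: inner_mult_vec_expand block_diag_part_def if_distrib if_distribR cong: if_cong)
  finally show ?thesis by simp
qed

lemma pos_def_mat_block_diag_part:
  fixes Q :: "real^'n^'n" and blk :: "'n \<Rightarrow> 's::finite"
  assumes pd: "pos_def_mat Q"
  shows "pos_def_mat (block_diag_part blk Q)"
proof -
  have "transpose (block_diag_part blk Q) = block_diag_part blk Q"
    by (auto simp: block_diag_part_def transpose_def vec_eq_iff pos_def_mat_entry_sym[OF pd])
  moreover have "0 < x \<bullet> (block_diag_part blk Q *v x)" if "x \<noteq> 0" for x
  proof -
    obtain i where "x $ i \<noteq> 0" using \<open>x \<noteq> 0\<close> by (auto simp: vec_eq_iff)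
    hence "block_proj blk (blk i) x \<noteq> 0" by (auto simp: block_proj_def vec_eq_iff)
    hence "0 < block_proj blk (blk i) x \<bullet> (Q *v block_proj blk (blk i) x)"
      using pd by (simp add: pos_def_mat_def)
    also have "\<dots> \<le> (\<Sum>b\<in>UNIV. block_proj blk b x \<bullet> (Q *v block_proj blk b x))"
      by (rule member_le_sum) (auto intro: pos_def_mat_quadratic_nonneg[OF pd])
    finally show ?thesis by (simp add: block_diag_part_quadratic_form)
  qed
  ultimately show ?thesis by (simp add: pos_def_mat_def)
qed

lemma pos_def_mat_invertible:
  fixes A :: "real^'n^'n"
  assumes "pos_def_mat A"
  shows "invertible A"
proof -
  have "inj ((*v) A)"
  proof (rule injI)
    fix x y assume "A *v x = A *v y"
    hence "(x - y) \<bullet> (A *v (x - y)) = 0" by (simp add: matrix_vector_mult_diff_distrib)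
    thus "x = y" using assms unfolding pos_def_mat_def by (metis less_irrefl right_minus_eq)
  qed
  thus ?thesis using matrix_left_invertible_injective invertible_left_inverse by blast
qed

lemma transpose_matrix_inv_pos_def:
  fixes A :: "real^'n^'n"
  assumes pd: "pos_def_mat A"
  shows "transpose (matrix_inv A) = matrix_inv A"
proof -
  have inv: "A ** matrix_inv A = mat 1" "matrix_inv A ** A = mat 1"
    using pos_def_mat_invertible[OF pd] unfolding matrix_inv_def invertible_def
    by (metis (mono_tags, lifting) someI_ex)+
  have "transpose (matrix_inv A) ** A = mat 1"
    using inv(1) pd by (metis matrix_transpose_mul pos_def_mat_def transpose_mat)
  hence "transpose (matrix_inv A) = transpose (matrix_inv A) ** (A ** matrix_inv A)"
    using inv by (simp add: matrix_mul_assoc)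
  also have "\<dots> = matrix_inv A"
    by (simp add: matrix_mul_assoc \<open>transpose (matrix_inv A) ** A = mat 1\<close>)
  finally show ?thesis .
qed

lemma transpose_Dext:
  fixes Q :: "real^'n^'n" and blk :: "'n \<Rightarrow> 's::finite"
  assumes "pos_def_mat Q"
  shows "transpose (Dext blk Q w) = Dext blk Q w"
proof -
  have inv_sym: "matrix_inv (block_diag_part blk Q) $ a $ b = matrix_inv (block_diag_part blk Q) $ b $ a"
    for a b
    using arg_cong[where f = "\<lambda>M. M $ b $ a",
        OF transpose_matrix_inv_pos_def[OF pos_def_mat_block_diag_part[OF assms, of blk]]]
    by (simp add: transpose_def)
  show ?thesis by (auto simp: Dext_def transpose_def vec_eq_iff inv_sym split: option.splits)
qed

lemma Dext_affine:
  fixes Q :: "real^'n^'n" and blk :: "'n \<Rightarrow> 's::finite"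
  assumes "u + v = 1"
  shows "Dext blk Q (u *\<^sub>R w + v *\<^sub>R z) = u *\<^sub>R Dext blk Q w + v *\<^sub>R Dext blk Q z"
proof -
  have last_entry: "1 - (\<Sum>k\<in>UNIV. u * w $ k + v * z $ k) =
        u * (1 - (\<Sum>k\<in>UNIV. w $ k)) + v * (1 - (\<Sum>k\<in>UNIV. z $ k))"
    using assms by (simp add: sum.distrib sum_distrib_left algebra_simps)
  have "Dext blk Q (u *\<^sub>R w + v *\<^sub>R z) $ i $ j = (u *\<^sub>R Dext blk Q w + v *\<^sub>R Dext blk Q z) $ i $ j"
    for i j
    using last_entry by (cases i; cases j) (simp_all add: Dext_def algebra_simps)
  thus ?thesis by (simp add: vec_eq_iff)
qed

lemma matrix_add_rdistrib: "((A::real^'n^'m) + B) ** C = A ** C + B ** C"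
  by (vector matrix_matrix_mult_def sum.distrib[symmetric] field_simps)

lemma convex_open_simplex:
  "convex {w :: real^'s. (\<forall>i. w $ i > 0) \<and> 1 - sum (\<lambda>i. w $ i) UNIV > 0}"
proof -
  have "{w :: real^'s. (\<forall>i. w $ i > 0) \<and> 1 - sum (\<lambda>i. w $ i) UNIV > 0} =
        (\<Inter>i. {w. axis i 1 \<bullet> w > 0}) \<inter> {w. (\<chi> i. 1) \<bullet> w < 1}"
    by (auto simp: inner_axis' inner_vec_def[of "\<chi> i. 1"])
  thus ?thesis
    by (simp add: convex_Int convex_INT convex_halfspace_gt convex_halfspace_lt)
qed

theorem proposition3:
  fixes Q :: "real^'n^'n" and blk :: "'n \<Rightarrow> 's::finite"
  assumes "pos_def_mat Q"
    and "surj blk"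
  shows "concave_on {w :: real^'s. (\<forall>i. w $ i > 0) \<and> 1 - sum (\<lambda>i. w $ i) UNIV > 0}
           (\<lambda>w. lambda_min (pd_sqrt (Qext Q) ** Dext blk Q w ** pd_sqrt (Qext Q)))"
proof (rule concave_on_lambda_min_affine[OF convex_open_simplex])
  have "transpose (pd_sqrt (Qext Q)) = pd_sqrt (Qext Q)"
    using pos_def_mat_pd_sqrt[OF pos_def_mat_Qext[OF assms(1)]] by (simp add: pos_def_mat_def)
  thus "transpose (pd_sqrt (Qext Q) ** Dext blk Q w ** pd_sqrt (Qext Q)) =
        pd_sqrt (Qext Q) ** Dext blk Q w ** pd_sqrt (Qext Q)" for w
    by (simp add: matrix_transpose_mul transpose_Dext[OF assms(1)] matrix_mul_assoc)
  show "pd_sqrt (Qext Q) ** Dext blk Q (u *\<^sub>R w + v *\<^sub>R z) ** pd_sqrt (Qext Q) =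
        u *\<^sub>R (pd_sqrt (Qext Q) ** Dext blk Q w ** pd_sqrt (Qext Q)) +
        v *\<^sub>R (pd_sqrt (Qext Q) ** Dext blk Q z ** pd_sqrt (Qext Q))" if "u + v = 1" for u v w z
    by (simp add: Dext_affine[OF that] matrix_add_ldistrib matrix_add_rdistrib
        matrix_scalar_ac scalar_matrix_assoc)
qed

end
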